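(* Let $S\subseteq\mathcal S_d$ be nonempty, $[d]$ partitioned into groups $G_1,\dots,G_g$, $\bar\alpha,\bar\beta\in[0,1]^g$, $k\in[d]$, and assume an $(\bar\alpha,\bar\beta)$-$k$-fair ranking in $\mathcal S_d$ exists. Set $\alpha'_i=|G_i|-\lceil\beta_i k\rceil$ and $\beta'_i=|G_i|-\lfloor\alpha_i k\rfloor$. Let $\tau$ be an $(\bar\alpha',\bar\beta')$-constrained bottom-$(d-k)$ ranking minimizing $2\sum_{\pi\in S}\sum_{i\in D_\tau}(\tau(i)-\pi(i))\mathbb{1}[\pi(i)<\tau(i)]$, and let $\sigma\in\mathcal S_d$ be a ranking with $\sigma(a)=\tau(a)$ for all $a\in D_\tau$ minimizing $2\sum_{\pi\in S}\sum_{i\in[d]}(\sigma(i)-\pi(i))\mathbb{1}[\pi(i)<\sigma(i)]$ among such extensions. Let $\sigma^*$ be any $(\bar\alpha,\bar\beta)$-$k$-fair ranking minimizing $\mathrm{Obj}$, $\mathrm{OPT}=\mathrm{Obj}(\sigma^* )$, and $R^*=\{a\in[d]:\sigma^*(a)>k\}$. Then $\sigma$ is $(\bar\alpha,\bar\beta)$-$k$-fair and $\mathrm{Obj}(\sigma)\le\overrightarrow{\mathrm{Obj}}(\sigma^*_{R^*})+\mathrm{OPT}$.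
   Context: $\mathcal{S}_d$ is the set of rankings of $[d]$, $\pi(a)$ the rank of $a$. A ranking is $(\bar\alpha,\bar\beta)$-$k$-fair if for every $i\in[g]$ its top $k$ positions contain at least $\lfloor\alpha_i k\rfloor$ and at most $\lceil\beta_i k\rceil$ members of $G_i$. A bottom-$m$ ranking is a bijection $\tau:D_\tau\to\{d-m+1,\dots,d\}$, $D_\tau\subseteq[d]$; it is $(\bar\alpha',\bar\beta')$-constrained if $\alpha'_i\le|D_\tau\cap G_i|\le\beta'_i$ for all $i$. $F(\pi,\sigma)=\sum_i|\pi(i)-\sigma(i)|$, $\mathrm{Obj}(\sigma)=\sum_{\pi\in S}F(\pi,\sigma)$, and for $D\subseteq[d]$, $\overrightarrow{\mathrm{Obj}}(\sigma_D):=2\sum_{\pi\in S}\sum_{i\in D}(\sigma(i)-\pi(i))\mathbb{1}[\pi(i)<\sigma(i)]$. *)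

theory Defs
  imports Complex_Main
begin

text \<open>Rankings of [d] = {1..d}: bijections of {1..d}, normalised to 0 outside {1..d}
  so that distinct elements of the set represent distinct rankings.\<close>
definition rankings :: "nat \<Rightarrow> (nat \<Rightarrow> nat) set" where
  "rankings d = {\<pi>. bij_betw \<pi> {1..d} {1..d} \<and> (\<forall>a. a \<notin> {1..d} \<longrightarrow> \<pi> a = 0)}"

definition is_partition :: "nat \<Rightarrow> nat \<Rightarrow> (nat \<Rightarrow> nat set) \<Rightarrow> bool" where
  "is_partition d g G \<longleftrightarrow>
     (\<forall>i\<in>{1..g}. G i \<noteq> {} \<and> G i \<subseteq> {1..d}) \<and>
     (\<forall>i\<in>{1..g}. \<forall>j\<in>{1..g}. i \<noteq> j \<longrightarrow> G i \<inter> G j = {}) \<and>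
     (\<Union>i\<in>{1..g}. G i) = {1..d}"

definition k_fair :: "nat \<Rightarrow> (nat \<Rightarrow> nat set) \<Rightarrow> (nat \<Rightarrow> real) \<Rightarrow> (nat \<Rightarrow> real)
    \<Rightarrow> nat \<Rightarrow> (nat \<Rightarrow> nat) \<Rightarrow> bool" where
  "k_fair g G \<alpha> \<beta> k \<pi> \<longleftrightarrow>
     (\<forall>i\<in>{1..g}. \<lfloor>\<alpha> i * real k\<rfloor> \<le> int (card {a \<in> G i. \<pi> a \<le> k}) \<and>
                  int (card {a \<in> G i. \<pi> a \<le> k}) \<le> \<lceil>\<beta> i * real k\<rceil>)"

definition bottom_ranking :: "nat \<Rightarrow> nat \<Rightarrow> nat set \<Rightarrow> (nat \<Rightarrow> nat) \<Rightarrow> bool" where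
  "bottom_ranking d m D \<tau> \<longleftrightarrow> D \<subseteq> {1..d} \<and> bij_betw \<tau> D {d - m + 1..d}"

definition constrained_bottom :: "nat \<Rightarrow> nat \<Rightarrow> (nat \<Rightarrow> nat set) \<Rightarrow> (nat \<Rightarrow> int) \<Rightarrow> (nat \<Rightarrow> int)
    \<Rightarrow> nat \<Rightarrow> nat set \<Rightarrow> (nat \<Rightarrow> nat) \<Rightarrow> bool" where
  "constrained_bottom d g G \<alpha>' \<beta>' m D \<tau> \<longleftrightarrow> bottom_ranking d m D \<tau> \<and>
     (\<forall>i\<in>{1..g}. \<alpha>' i \<le> int (card (D \<inter> G i)) \<and> int (card (D \<inter> G i)) \<le> \<beta>' i)"

definition footrule :: "nat \<Rightarrow> (nat \<Rightarrow> nat) \<Rightarrow> (nat \<Rightarrow> nat) \<Rightarrow> int" where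
  "footrule d \<pi> \<sigma> = (\<Sum>i\<in>{1..d}. \<bar>int (\<pi> i) - int (\<sigma> i)\<bar>)"

definition Obj :: "nat \<Rightarrow> (nat \<Rightarrow> nat) set \<Rightarrow> (nat \<Rightarrow> nat) \<Rightarrow> int" where
  "Obj d S \<sigma> = (\<Sum>\<pi>\<in>S. footrule d \<pi> \<sigma>)"

definition ObjDir :: "(nat \<Rightarrow> nat) set \<Rightarrow> nat set \<Rightarrow> (nat \<Rightarrow> nat) \<Rightarrow> int" where
  "ObjDir S D \<sigma> = 2 * (\<Sum>\<pi>\<in>S. \<Sum>i\<in>D. (if \<pi> i < \<sigma> i then int (\<sigma> i) - int (\<pi> i) else 0))"

end

theory Submission
  imports Defs
begin

text \<open>Between permutations the footrule equals twice the total upward displacement, so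
  Obj is the directed objective over all of [d]. A ranking is k-fair exactly when the set of
  elements it places below position k meets the complementary bounds \<alpha>', \<beta>'. Hence \<sigma>, whose
  bottom set is D, is fair, and the bottom part of \<sigma>* competes with \<tau>. Completing \<tau> by
  ranking the remaining k elements in the order of \<sigma>* gives each of them a rank at most its
  rank under \<sigma>*, so the directed cost of \<sigma> is at most that of \<tau> plus that of \<sigma>*.\<close>

lemma ObjDir_Un_disjoint:
  "finite A \<Longrightarrow> finite B \<Longrightarrow> A \<inter> B = {} \<Longrightarrow>
   ObjDir S (A \<union> B) \<sigma> = ObjDir S A \<sigma> + ObjDir S B \<sigma>"
  by (simp add: ObjDir_def sum.union_disjoint sum.distrib algebra_simps)

lemma ObjDir_mono_set: "finite B \<Longrightarrow> A \<subseteq> B \<Longrightarrow> ObjDir S A \<sigma> \<le> ObjDir S B \<sigma>"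
  unfolding ObjDir_def by (auto intro!: sum_mono sum_mono2)

lemma ObjDir_mono: "\<forall>a\<in>A. \<sigma> a \<le> \<sigma>' a \<Longrightarrow> ObjDir S A \<sigma> \<le> ObjDir S A \<sigma>'"
  unfolding ObjDir_def by (auto intro!: sum_mono)

lemma ObjDir_cong: "\<forall>a\<in>A. \<sigma> a = \<sigma>' a \<Longrightarrow> ObjDir S A \<sigma> = ObjDir S A \<sigma>'"
  unfolding ObjDir_def by (auto intro!: sum.cong)

lemma sum_ranking: "\<pi> \<in> rankings d \<Longrightarrow> (\<Sum>i\<in>{1..d}. \<pi> i) = \<Sum>{1..d}"
  unfolding rankings_def using sum.reindex_bij_betw[of \<pi> "{1..d}" "{1..d}" id] by auto

lemma footrule_eq_twice_upward_displacement:
  assumes "\<pi> \<in> rankings d" "\<sigma> \<in> rankings d"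
  shows "footrule d \<pi> \<sigma> =
         2 * (\<Sum>i\<in>{1..d}. if \<pi> i < \<sigma> i then int (\<sigma> i) - int (\<pi> i) else 0)"
proof -
  have abs_eq: "\<And>i. \<bar>int (\<pi> i) - int (\<sigma> i)\<bar> =
      2 * (if \<pi> i < \<sigma> i then int (\<sigma> i) - int (\<pi> i) else 0) - (int (\<sigma> i) - int (\<pi> i))"
    by auto
  have "(\<Sum>i\<in>{1..d}. int (\<sigma> i)) = (\<Sum>i\<in>{1..d}. int (\<pi> i))"
    using sum_ranking[OF assms(1)] sum_ranking[OF assms(2)] by (metis of_nat_sum)
  then show ?thesis
    unfolding footrule_def abs_eq by (simp add: sum_subtractf sum_distrib_left)
qed

lemma Obj_eq_ObjDir:
  "S \<subseteq> rankings d \<Longrightarrow> \<sigma> \<in> rankings d \<Longrightarrow> Obj d S \<sigma> = ObjDir S {1..d} \<sigma>"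
  unfolding Obj_def ObjDir_def sum_distrib_left
  by (rule sum.cong) (auto simp: footrule_eq_twice_upward_displacement sum_distrib_left)

lemma bij_betw_rank_card:
  fixes \<rho> :: "'a \<Rightarrow> 'b::linorder"
  assumes fin: "finite T" and inj: "inj_on \<rho> T"
  shows "bij_betw (\<lambda>a. card {b\<in>T. \<rho> b \<le> \<rho> a}) T {1..card T}"
proof -
  let ?r = "\<lambda>a. card {b\<in>T. \<rho> b \<le> \<rho> a}"
  have rank_less: "?r a < ?r b" if "b \<in> T" "\<rho> a < \<rho> b" for a b
  proof (rule psubset_card_mono)
    show "{c\<in>T. \<rho> c \<le> \<rho> a} \<subset> {c\<in>T. \<rho> c \<le> \<rho> b}"
    proof -
      have "{c\<in>T. \<rho> c \<le> \<rho> a} \<subseteq> {c\<in>T. \<rho> c \<le> \<rho> b}"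
        using that(2) by auto
      moreover have "b \<notin> {c\<in>T. \<rho> c \<le> \<rho> a}" "b \<in> {c\<in>T. \<rho> c \<le> \<rho> b}"
        using that by auto
      ultimately show ?thesis by blast
    qed
  qed (use fin in simp)
  have "inj_on ?r T"
  proof (rule inj_onI)
    fix a b assume "a \<in> T" "b \<in> T" "?r a = ?r b"
    then show "a = b"
      using rank_less[of b a] rank_less[of a b] inj_onD[OF inj] by (metis less_irrefl linorder_neqE)
  qed
  moreover have "?r ` T \<subseteq> {1..card T}"
  proof
    fix n assume "n \<in> ?r ` T"
    then obtain a where a: "a \<in> T" "n = ?r a" by blast
    then have "0 < n" using fin by (auto simp: card_gt_0_iff)
    moreover have "n \<le> card T" using a fin by (auto intro: card_mono)
    ultimately show "n \<in> {1..card T}" by simp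
  qed
  ultimately show ?thesis
    unfolding bij_betw_def by (simp add: card_image card_subset_eq)
qed

lemma rank_card_le:
  fixes \<rho> :: "'a \<Rightarrow> nat"
  assumes "inj_on \<rho> T" "\<forall>b\<in>T. 0 < \<rho> b"
  shows "card {b\<in>T. \<rho> b \<le> \<rho> a} \<le> \<rho> a"
proof -
  have "card {b\<in>T. \<rho> b \<le> \<rho> a} \<le> card {1..\<rho> a}"
    by (rule card_inj_on_le) (use assms in \<open>auto intro: inj_on_subset\<close>)
  then show ?thesis by simp
qed

lemma bottom_ranking_complement_iff:
  "k \<le> d \<Longrightarrow> bottom_ranking d (d - k) D \<tau> \<longleftrightarrow> D \<subseteq> {1..d} \<and> bij_betw \<tau> D {k<..d}"
  by (simp add: bottom_ranking_def atLeastSucAtMost_greaterThanAtMost)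

lemma bottom_ranking_bottom_set:
  assumes "\<sigma> \<in> rankings d" "k \<le> d"
  shows "bottom_ranking d (d - k) {a\<in>{1..d}. k < \<sigma> a} \<sigma>"
proof -
  have bij: "bij_betw \<sigma> {1..d} {1..d}"
    using assms(1) by (simp add: rankings_def)
  have "\<sigma> ` {a\<in>{1..d}. k < \<sigma> a} = {y \<in> \<sigma> ` {1..d}. k < y}"
    by auto
  also have "\<dots> = {k<..d}"
    using bij by (auto simp: bij_betw_def)
  finally have "bij_betw \<sigma> {a\<in>{1..d}. k < \<sigma> a} {k<..d}"
    using bij by (auto simp: bij_betw_def intro: inj_on_subset)
  then show ?thesis
    using assms(2) by (auto simp: bottom_ranking_complement_iff)
qed

lemma bottom_set_of_extension:
  assumes \<sigma>: "\<sigma> \<in> rankings d" and D: "D \<subseteq> {1..d}" and \<tau>: "bij_betw \<tau> D {k<..d}"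
    and ext: "\<forall>a\<in>D. \<sigma> a = \<tau> a"
  shows "{a\<in>{1..d}. k < \<sigma> a} = D"
proof
  show "D \<subseteq> {a\<in>{1..d}. k < \<sigma> a}"
    using D ext bij_betwE[OF \<tau>] by auto
  show "{a\<in>{1..d}. k < \<sigma> a} \<subseteq> D"
  proof
    fix a assume a: "a \<in> {a\<in>{1..d}. k < \<sigma> a}"
    have bij: "bij_betw \<sigma> {1..d} {1..d}"
      using \<sigma> by (simp add: rankings_def)
    then have "\<sigma> a \<in> {k<..d}"
      using a by (auto dest: bij_betwE)
    then have "\<sigma> a \<in> \<tau> ` D"
      using \<tau> by (simp add: bij_betw_def)
    then obtain b where b: "b \<in> D" "\<sigma> a = \<tau> b"
      by blast
    then have "\<sigma> b = \<sigma> a"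
      using ext by simp
    then have "b = a"
      using a b(1) D bij by (auto simp: bij_betw_def dest: inj_onD)
    then show "a \<in> D"
      using b(1) by simp
  qed
qed

lemma k_fair_iff_bottom_counts:
  assumes G: "\<forall>i\<in>{1..g}. G i \<subseteq> {1..d}"
    and \<alpha>': "\<forall>i. \<alpha>' i = int (card (G i)) - \<lceil>\<beta> i * real k\<rceil>"
    and \<beta>': "\<forall>i. \<beta>' i = int (card (G i)) - \<lfloor>\<alpha> i * real k\<rfloor>"
  shows "k_fair g G \<alpha> \<beta> k \<sigma> \<longleftrightarrow>
    (\<forall>i\<in>{1..g}. \<alpha>' i \<le> int (card ({a\<in>{1..d}. k < \<sigma> a} \<inter> G i)) \<and>
                 int (card ({a\<in>{1..d}. k < \<sigma> a} \<inter> G i)) \<le> \<beta>' i)"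
proof -
  have card_top: "int (card {a \<in> G i. \<sigma> a \<le> k}) =
      int (card (G i)) - int (card ({a\<in>{1..d}. k < \<sigma> a} \<inter> G i))" if i: "i \<in> {1..g}" for i
  proof -
    have Gi: "G i \<subseteq> {1..d}"
      using G i by blast
    then have "finite (G i)"
      using finite_subset by blast
    moreover have "{a\<in>{1..d}. k < \<sigma> a} \<inter> G i = G i - {a \<in> G i. \<sigma> a \<le> k}"
      using Gi by auto
    ultimately show ?thesis
      by (simp add: card_Diff_subset card_mono of_nat_diff)
  qed
  show ?thesis
    unfolding k_fair_def by (intro ball_cong refl) (use card_top \<alpha>' \<beta>' in auto)
qed

lemma exists_ranking_extension_below:
  assumes k: "k \<le> d" and D: "D \<subseteq> {1..d}" and \<tau>: "bij_betw \<tau> D {k<..d}"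
    and \<rho>: "\<rho> \<in> rankings d"
  shows "\<exists>\<sigma>\<in>rankings d. (\<forall>a\<in>D. \<sigma> a = \<tau> a) \<and> (\<forall>a\<in>{1..d} - D. \<sigma> a \<le> \<rho> a)"
proof -
  define T where "T = {1..d} - D"
  define r where "r a = card {b\<in>T. \<rho> b \<le> \<rho> a}" for a
  define \<sigma> where "\<sigma> a = (if a \<in> D then \<tau> a else if a \<in> T then r a else 0)" for a
  have \<rho>_bij: "bij_betw \<rho> {1..d} {1..d}"
    using \<rho> by (simp add: rankings_def)
  have \<rho>_inj: "inj_on \<rho> T"
    using \<rho>_bij unfolding T_def bij_betw_def by (auto intro: inj_on_subset)
  have "card D = d - k"
    using bij_betw_same_card[OF \<tau>] by simp
  then have "card T = k"
    using k D unfolding T_def by (simp add: card_Diff_subset finite_subset)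
  then have "bij_betw r T {1..k}"
    using bij_betw_rank_card[OF _ \<rho>_inj] unfolding r_def T_def by simp
  then have "bij_betw \<sigma> T {1..k}"
    by (rule bij_betw_cong[THEN iffD1, rotated]) (simp add: \<sigma>_def T_def)
  moreover have "bij_betw \<sigma> D {k<..d}"
    using \<tau> by (rule bij_betw_cong[THEN iffD1, rotated]) (simp add: \<sigma>_def)
  ultimately have "bij_betw \<sigma> (T \<union> D) ({1..k} \<union> {k<..d})"
    by (rule bij_betw_combine) auto
  moreover have "T \<union> D = {1..d}" "{1..k} \<union> {k<..d} = {1..d}"
    using k D by (auto simp: T_def)
  moreover have "\<forall>a. a \<notin> {1..d} \<longrightarrow> \<sigma> a = 0"
    using D by (auto simp: \<sigma>_def T_def)
  ultimately have "\<sigma> \<in> rankings d"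
    by (simp add: rankings_def)
  moreover have "\<forall>b\<in>T. 0 < \<rho> b"
    using bij_betwE[OF \<rho>_bij] by (force simp: T_def)
  then have "r a \<le> \<rho> a" for a
    unfolding r_def by (rule rank_card_le[OF \<rho>_inj])
  ultimately show ?thesis
    by (intro bexI[of _ \<sigma>]) (auto simp: \<sigma>_def T_def)
qed

lemma ObjDir_le_of_extension_below:
  assumes D: "D \<subseteq> {1..d}" and ext: "\<forall>a\<in>D. \<sigma> a = \<tau> a"
    and below: "\<forall>a\<in>{1..d} - D. \<sigma> a \<le> \<rho> a"
  shows "ObjDir S {1..d} \<sigma> \<le> ObjDir S D \<tau> + ObjDir S {1..d} \<rho>"
proof -
  have "ObjDir S {1..d} \<sigma> = ObjDir S D \<sigma> + ObjDir S ({1..d} - D) \<sigma>"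
    using ObjDir_Un_disjoint[of D "{1..d} - D" S \<sigma>] D by (simp add: finite_subset Un_absorb1)
  also have "ObjDir S D \<sigma> = ObjDir S D \<tau>"
    using ext by (rule ObjDir_cong)
  also have "ObjDir S ({1..d} - D) \<sigma> \<le> ObjDir S ({1..d} - D) \<rho>"
    using below by (rule ObjDir_mono)
  also have "\<dots> \<le> ObjDir S {1..d} \<rho>"
    by (rule ObjDir_mono_set) auto
  finally show ?thesis
    by simp
qed

theorem lemmaB2:
  fixes d g k :: nat and G :: "nat \<Rightarrow> nat set" and \<alpha> \<beta> :: "nat \<Rightarrow> real"
    and S :: "(nat \<Rightarrow> nat) set"
    and \<alpha>' \<beta>' :: "nat \<Rightarrow> int"
    and D :: "nat set" and \<tau> \<sigma> \<sigma>s :: "nat \<Rightarrow> nat"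
  assumes S_sub: "S \<subseteq> rankings d" and S_ne: "S \<noteq> {}"
    and part: "is_partition d g G"
    and ab: "\<forall>i\<in>{1..g}. 0 \<le> \<alpha> i \<and> \<alpha> i \<le> 1 \<and> 0 \<le> \<beta> i \<and> \<beta> i \<le> 1"
    and k: "1 \<le> k" "k \<le> d"
    and fair_ex: "\<exists>\<pi>\<in>rankings d. k_fair g G \<alpha> \<beta> k \<pi>"
    and \<alpha>'_def: "\<forall>i. \<alpha>' i = int (card (G i)) - \<lceil>\<beta> i * real k\<rceil>"
    and \<beta>'_def: "\<forall>i. \<beta>' i = int (card (G i)) - \<lfloor>\<alpha> i * real k\<rfloor>"
    and \<tau>: "constrained_bottom d g G \<alpha>' \<beta>' (d - k) D \<tau>"
    and \<tau>_min: "\<And>D2 \<tau>2. constrained_bottom d g G \<alpha>' \<beta>' (d - k) D2 \<tau>2 \<Longrightarrow>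
                   ObjDir S D \<tau> \<le> ObjDir S D2 \<tau>2"
    and \<sigma>: "\<sigma> \<in> rankings d" "\<forall>a\<in>D. \<sigma> a = \<tau> a"
    and \<sigma>_min: "\<And>\<sigma>2. \<sigma>2 \<in> rankings d \<Longrightarrow> \<forall>a\<in>D. \<sigma>2 a = \<tau> a \<Longrightarrow>
                   ObjDir S {1..d} \<sigma> \<le> ObjDir S {1..d} \<sigma>2"
    and \<sigma>s: "\<sigma>s \<in> rankings d" "k_fair g G \<alpha> \<beta> k \<sigma>s"
    and \<sigma>s_min: "\<And>\<sigma>2. \<sigma>2 \<in> rankings d \<Longrightarrow> k_fair g G \<alpha> \<beta> k \<sigma>2 \<Longrightarrow> Obj d S \<sigma>s \<le> Obj d S \<sigma>2"
  shows "k_fair g G \<alpha> \<beta> k \<sigma> \<and>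
         Obj d S \<sigma> \<le> ObjDir S {a\<in>{1..d}. \<sigma>s a > k} \<sigma>s + Obj d S \<sigma>s"
proof
  have D: "D \<subseteq> {1..d}" "bij_betw \<tau> D {k<..d}"
    using \<tau> k(2) by (simp_all add: constrained_bottom_def bottom_ranking_complement_iff)
  have "\<forall>i\<in>{1..g}. G i \<subseteq> {1..d}"
    using part by (simp add: is_partition_def)
  note fair_iff = k_fair_iff_bottom_counts[OF this \<alpha>'_def \<beta>'_def]
  show "k_fair g G \<alpha> \<beta> k \<sigma>"
    using \<tau> unfolding fair_iff bottom_set_of_extension[OF \<sigma>(1) D \<sigma>(2)] constrained_bottom_def
    by blast
  have "constrained_bottom d g G \<alpha>' \<beta>' (d - k) {a\<in>{1..d}. \<sigma>s a > k} \<sigma>s"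
    using \<sigma>s bottom_ranking_bottom_set[OF \<sigma>s(1) k(2)] unfolding constrained_bottom_def fair_iff
    by blast
  then have \<tau>_le: "ObjDir S D \<tau> \<le> ObjDir S {a\<in>{1..d}. \<sigma>s a > k} \<sigma>s"
    by (rule \<tau>_min)
  obtain \<sigma>' where \<sigma>': "\<sigma>' \<in> rankings d" "\<forall>a\<in>D. \<sigma>' a = \<tau> a" "\<forall>a\<in>{1..d} - D. \<sigma>' a \<le> \<sigma>s a"
    using exists_ranking_extension_below[OF k(2) D \<sigma>s(1)] by blast
  have "Obj d S \<sigma> = ObjDir S {1..d} \<sigma>"
    by (rule Obj_eq_ObjDir[OF S_sub \<sigma>(1)])
  also have "\<dots> \<le> ObjDir S {1..d} \<sigma>'"
    using \<sigma>_min \<sigma>'(1,2) by blast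
  also have "\<dots> \<le> ObjDir S D \<tau> + ObjDir S {1..d} \<sigma>s"
    using D(1) \<sigma>'(2,3) by (rule ObjDir_le_of_extension_below)
  finally show "Obj d S \<sigma> \<le> ObjDir S {a\<in>{1..d}. \<sigma>s a > k} \<sigma>s + Obj d S \<sigma>s"
    using \<tau>_le Obj_eq_ObjDir[OF S_sub \<sigma>s(1)] by simp
qed

end
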